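(* Let $\mathsf{X}$ be a small category and let $T:\mathbb{R}_{\ge 0}\to\mathsf{End}(\mathsf{X})$ be a strict monoidal functor, where $\mathbb{R}_{\ge0}$ is the poset category of nonnegative reals (a unique morphism $s\to t$ iff $s\le t$) with monoidal structure given by addition. Let $\mathrm{W}(t)=t$. Then for all $X,Y\in\mathsf{X}_0$, the flow interleaving distance $d^{\mathrm{Fl}}_T(X,Y)$ equals the $\mathbb{R}_{\ge0}$-interleaving distance $d_{T,\mathrm{W}}(X,Y)$.
   Context: $\mathsf{End}(\mathsf{X})$ is the strict monoidal category of endofunctors of $\mathsf{X}$ and natural transformations (tensor = composition / horizontal composition). Write $T_t=T(t)$ and $T(s\le t):T_s\Rightarrow T_t$ for the image of the morphism $s\le t$; strictness means $T_0=1_{\mathsf X}$, $T_{s+t}=T_sT_t$, and $T$ takes sums of morphisms to horizontal composites. A $t$-flow interleaving of $X,Y$ is a pair of morphisms $\phi:X\to T_t(Y)$, $\psi:Y\to T_t(X)$ with $T_t(\psi)\circ\phi=T(0\le 2t)_X$ and $T_t(\phi)\circ\psi=T(0\le 2t)_Y$; $d^{\mathrm{Fl}}_T(X,Y)=\inf\{t\ge0:\text{a } t\text{-flow interleaving exists}\}$. For $s,t\ge0$, $X$ and $Y$ are $(s,t)$-interleaved if there exist $\phi:X\to T_s(Y)$, $\psi:Y\to T_t(X)$ with $T_s(\psi)\circ\phi=T(0\le s+t)_X$ and $T_t(\phi)\circ\psi=T(0\le t+s)_Y$; then $d_{T,\mathrm{W}}(X,Y)=\inf\{\max\{s,t\}: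 X,Y\ (s,t)\text{-interleaved}\}$. Both infima of the empty set are $\infty$. *)

theory Defs
  imports Complex_Main "HOL-Library.Extended_Real"
begin

definition category ::
  "'o set \<Rightarrow> ('o \<Rightarrow> 'o \<Rightarrow> 'm set) \<Rightarrow> ('m \<Rightarrow> 'm \<Rightarrow> 'm) \<Rightarrow> ('o \<Rightarrow> 'm) \<Rightarrow> bool" where
  "category Ob Hom cmp idm \<longleftrightarrow>
     (\<forall>a b. Hom a b \<noteq> {} \<longrightarrow> a \<in> Ob \<and> b \<in> Ob) \<and>
     (\<forall>a b a' b' f. f \<in> Hom a b \<longrightarrow> f \<in> Hom a' b' \<longrightarrow> a = a' \<and> b = b') \<and>
     (\<forall>a\<in>Ob. idm a \<in> Hom a a) \<and>
     (\<forall>a b c f g. f \<in> Hom a b \<longrightarrow> g \<in> Hom b c \<longrightarrow> cmp g f \<in> Hom a c) \<and>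
     (\<forall>a b c d f g h. f \<in> Hom a b \<longrightarrow> g \<in> Hom b c \<longrightarrow> h \<in> Hom c d \<longrightarrow>
         cmp h (cmp g f) = cmp (cmp h g) f) \<and>
     (\<forall>a b f. f \<in> Hom a b \<longrightarrow> cmp (idm b) f = f \<and> cmp f (idm a) = f)"

definition endofunctor ::
  "'o set \<Rightarrow> ('o \<Rightarrow> 'o \<Rightarrow> 'm set) \<Rightarrow> ('m \<Rightarrow> 'm \<Rightarrow> 'm) \<Rightarrow> ('o \<Rightarrow> 'm) \<Rightarrow>
   ('o \<Rightarrow> 'o) \<Rightarrow> ('m \<Rightarrow> 'm) \<Rightarrow> bool" where
  "endofunctor Ob Hom cmp idm F Fm \<longleftrightarrow>
     (\<forall>a\<in>Ob. F a \<in> Ob) \<and>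
     (\<forall>a b f. f \<in> Hom a b \<longrightarrow> Fm f \<in> Hom (F a) (F b)) \<and>
     (\<forall>a\<in>Ob. Fm (idm a) = idm (F a)) \<and>
     (\<forall>a b c f g. f \<in> Hom a b \<longrightarrow> g \<in> Hom b c \<longrightarrow> Fm (cmp g f) = cmp (Fm g) (Fm f))"

definition nat_trans ::
  "'o set \<Rightarrow> ('o \<Rightarrow> 'o \<Rightarrow> 'm set) \<Rightarrow> ('m \<Rightarrow> 'm \<Rightarrow> 'm) \<Rightarrow>
   ('o \<Rightarrow> 'o) \<Rightarrow> ('m \<Rightarrow> 'm) \<Rightarrow> ('o \<Rightarrow> 'o) \<Rightarrow> ('m \<Rightarrow> 'm) \<Rightarrow> ('o \<Rightarrow> 'm) \<Rightarrow> bool" where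
  "nat_trans Ob Hom cmp F Fm G Gm eta \<longleftrightarrow>
     (\<forall>a\<in>Ob. eta a \<in> Hom (F a) (G a)) \<and>
     (\<forall>a b f. f \<in> Hom a b \<longrightarrow> cmp (Gm f) (eta a) = cmp (eta b) (Fm f))"

text \<open>A strict monoidal functor T from the poset ([0,\<infinity>), \<le>, +) to End(X):
  TO t / TM t are the object/morphism maps of T_t, and TN s t is T(s \<le> t).
  Tensor in End(X) is composition, T_s \<otimes> T_t = T_s \<circ> T_t; horizontal composite of
  alpha : F \<Rightarrow> F' and beta : G \<Rightarrow> G' has components alpha_{G' a} \<circ> F(beta_a).\<close>
definition strict_monoidal_flow ::
  "'o set \<Rightarrow> ('o \<Rightarrow> 'o \<Rightarrow> 'm set) \<Rightarrow> ('m \<Rightarrow> 'm \<Rightarrow> 'm) \<Rightarrow> ('o \<Rightarrow> 'm) \<Rightarrow>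
   (real \<Rightarrow> 'o \<Rightarrow> 'o) \<Rightarrow> (real \<Rightarrow> 'm \<Rightarrow> 'm) \<Rightarrow> (real \<Rightarrow> real \<Rightarrow> 'o \<Rightarrow> 'm) \<Rightarrow> bool" where
  "strict_monoidal_flow Ob Hom cmp idm TO TM TN \<longleftrightarrow>
     (\<forall>t. 0 \<le> t \<longrightarrow> endofunctor Ob Hom cmp idm (TO t) (TM t)) \<and>
     (\<forall>s t. 0 \<le> s \<longrightarrow> s \<le> t \<longrightarrow> nat_trans Ob Hom cmp (TO s) (TM s) (TO t) (TM t) (TN s t)) \<and>
     (\<forall>t. 0 \<le> t \<longrightarrow> (\<forall>a\<in>Ob. TN t t a = idm (TO t a))) \<and>
     (\<forall>s t u. 0 \<le> s \<longrightarrow> s \<le> t \<longrightarrow> t \<le> u \<longrightarrow>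
         (\<forall>a\<in>Ob. TN s u a = cmp (TN t u a) (TN s t a))) \<and>
     (\<forall>a\<in>Ob. TO 0 a = a) \<and>
     (\<forall>a b f. f \<in> Hom a b \<longrightarrow> TM 0 f = f) \<and>
     (\<forall>s t. 0 \<le> s \<longrightarrow> 0 \<le> t \<longrightarrow>
         (\<forall>a\<in>Ob. TO (s + t) a = TO s (TO t a)) \<and>
         (\<forall>a b f. f \<in> Hom a b \<longrightarrow> TM (s + t) f = TM s (TM t f))) \<and>
     (\<forall>s s' t t'. 0 \<le> s \<longrightarrow> s \<le> s' \<longrightarrow> 0 \<le> t \<longrightarrow> t \<le> t' \<longrightarrow>
         (\<forall>a\<in>Ob. TN (s + t) (s' + t') a = cmp (TN s s' (TO t' a)) (TM s (TN t t' a))))"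

definition interleaved ::
  "('o \<Rightarrow> 'o \<Rightarrow> 'm set) \<Rightarrow> ('m \<Rightarrow> 'm \<Rightarrow> 'm) \<Rightarrow>
   (real \<Rightarrow> 'o \<Rightarrow> 'o) \<Rightarrow> (real \<Rightarrow> 'm \<Rightarrow> 'm) \<Rightarrow> (real \<Rightarrow> real \<Rightarrow> 'o \<Rightarrow> 'm) \<Rightarrow>
   real \<Rightarrow> real \<Rightarrow> 'o \<Rightarrow> 'o \<Rightarrow> bool" where
  "interleaved Hom cmp TO TM TN s t X Y \<longleftrightarrow>
     (\<exists>phi psi. phi \<in> Hom X (TO s Y) \<and> psi \<in> Hom Y (TO t X) \<and>
        cmp (TM s psi) phi = TN 0 (s + t) X \<and>
        cmp (TM t phi) psi = TN 0 (t + s) Y)"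

definition flow_interleaved ::
  "('o \<Rightarrow> 'o \<Rightarrow> 'm set) \<Rightarrow> ('m \<Rightarrow> 'm \<Rightarrow> 'm) \<Rightarrow>
   (real \<Rightarrow> 'o \<Rightarrow> 'o) \<Rightarrow> (real \<Rightarrow> 'm \<Rightarrow> 'm) \<Rightarrow> (real \<Rightarrow> real \<Rightarrow> 'o \<Rightarrow> 'm) \<Rightarrow>
   real \<Rightarrow> 'o \<Rightarrow> 'o \<Rightarrow> bool" where
  "flow_interleaved Hom cmp TO TM TN t X Y \<longleftrightarrow>
     (\<exists>phi psi. phi \<in> Hom X (TO t Y) \<and> psi \<in> Hom Y (TO t X) \<and>
        cmp (TM t psi) phi = TN 0 (2 * t) X \<and>
        cmp (TM t phi) psi = TN 0 (2 * t) Y)"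

definition flow_dist ::
  "('o \<Rightarrow> 'o \<Rightarrow> 'm set) \<Rightarrow> ('m \<Rightarrow> 'm \<Rightarrow> 'm) \<Rightarrow>
   (real \<Rightarrow> 'o \<Rightarrow> 'o) \<Rightarrow> (real \<Rightarrow> 'm \<Rightarrow> 'm) \<Rightarrow> (real \<Rightarrow> real \<Rightarrow> 'o \<Rightarrow> 'm) \<Rightarrow>
   'o \<Rightarrow> 'o \<Rightarrow> ereal" where
  "flow_dist Hom cmp TO TM TN X Y =
     Inf (ereal ` {t. 0 \<le> t \<and> flow_interleaved Hom cmp TO TM TN t X Y})"

definition W_dist ::
  "('o \<Rightarrow> 'o \<Rightarrow> 'm set) \<Rightarrow> ('m \<Rightarrow> 'm \<Rightarrow> 'm) \<Rightarrow>
   (real \<Rightarrow> 'o \<Rightarrow> 'o) \<Rightarrow> (real \<Rightarrow> 'm \<Rightarrow> 'm) \<Rightarrow> (real \<Rightarrow> real \<Rightarrow> 'o \<Rightarrow> 'm) \<Rightarrow>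
   'o \<Rightarrow> 'o \<Rightarrow> ereal" where
  "W_dist Hom cmp TO TM TN X Y =
     Inf ((\<lambda>(s, t). ereal (max s t)) `
          {(s, t). 0 \<le> s \<and> 0 \<le> t \<and> interleaved Hom cmp TO TM TN s t X Y})"

end

theory Submission
  imports Defs
begin

text \<open>A \<open>t\<close>-flow interleaving is literally a \<open>(t,t)\<close>-interleaving. Conversely, an
  \<open>(s,t)\<close>-interleaving \<open>(\<phi>,\<psi>)\<close> can be pushed forward to an \<open>(s',t')\<close>-interleaving
  \<open>(T(s\<le>s')\<^sub>Y \<circ> \<phi>, T(t\<le>t')\<^sub>X \<circ> \<psi>)\<close> for all \<open>s' \<ge> s\<close>, \<open>t' \<ge> t\<close>: naturality of
  \<open>T(s\<le>s')\<close> and strictness of \<open>T\<close> turn the new composite into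
  \<open>T(s+t \<le> s'+t') \<circ> T(0 \<le> s+t) = T(0 \<le> s'+t')\<close>. Taking \<open>s' = t' = max s t\<close> shows that
  the values \<open>max s t\<close> over all \<open>(s,t)\<close>-interleavings are exactly the \<open>t\<close> admitting a
  \<open>t\<close>-flow interleaving, so both distances are infima of the same set.\<close>

lemma flow_interleaved_iff_interleaved:
  "flow_interleaved Hom cmp TO TM TN t X Y \<longleftrightarrow> interleaved Hom cmp TO TM TN t t X Y"
  unfolding flow_interleaved_def interleaved_def mult_2 ..

locale category_with_flow =
  fixes Ob :: "'o set" and Hom :: "'o \<Rightarrow> 'o \<Rightarrow> 'm set"
    and cmp :: "'m \<Rightarrow> 'm \<Rightarrow> 'm" and idm :: "'o \<Rightarrow> 'm"
    and TO :: "real \<Rightarrow> 'o \<Rightarrow> 'o" and TM :: "real \<Rightarrow> 'm \<Rightarrow> 'm"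
    and TN :: "real \<Rightarrow> real \<Rightarrow> 'o \<Rightarrow> 'm"
  assumes category: "category Ob Hom cmp idm"
    and flow: "strict_monoidal_flow Ob Hom cmp idm TO TM TN"
begin

lemma comp_in_Hom: "f \<in> Hom a b \<Longrightarrow> g \<in> Hom b c \<Longrightarrow> cmp g f \<in> Hom a c"
  using category unfolding category_def by blast

lemma comp_assoc:
  "f \<in> Hom a b \<Longrightarrow> g \<in> Hom b c \<Longrightarrow> h \<in> Hom c d \<Longrightarrow> cmp h (cmp g f) = cmp (cmp h g) f"
  using category unfolding category_def by blast

lemma TO_TM_endofunctor: "0 \<le> u \<Longrightarrow> endofunctor Ob Hom cmp idm (TO u) (TM u)"
  using flow unfolding strict_monoidal_flow_def by fast

lemma TN_nat_trans:
  "0 \<le> u \<Longrightarrow> u \<le> v \<Longrightarrow> nat_trans Ob Hom cmp (TO u) (TM u) (TO v) (TM v) (TN u v)"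
  using flow unfolding strict_monoidal_flow_def by fast

lemma TO_in_Ob: "0 \<le> u \<Longrightarrow> a \<in> Ob \<Longrightarrow> TO u a \<in> Ob"
  using TO_TM_endofunctor unfolding endofunctor_def by blast

lemma TM_in_Hom: "0 \<le> u \<Longrightarrow> f \<in> Hom a b \<Longrightarrow> TM u f \<in> Hom (TO u a) (TO u b)"
  using TO_TM_endofunctor unfolding endofunctor_def by blast

lemma TM_comp:
  "0 \<le> u \<Longrightarrow> f \<in> Hom a b \<Longrightarrow> g \<in> Hom b c \<Longrightarrow> TM u (cmp g f) = cmp (TM u g) (TM u f)"
  using TO_TM_endofunctor unfolding endofunctor_def by blast

lemma TN_in_Hom: "0 \<le> u \<Longrightarrow> u \<le> v \<Longrightarrow> a \<in> Ob \<Longrightarrow> TN u v a \<in> Hom (TO u a) (TO v a)"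
  using TN_nat_trans unfolding nat_trans_def by blast

lemma TN_natural:
  "0 \<le> u \<Longrightarrow> u \<le> v \<Longrightarrow> f \<in> Hom a b \<Longrightarrow> cmp (TM v f) (TN u v a) = cmp (TN u v b) (TM u f)"
  using TN_nat_trans unfolding nat_trans_def by blast

lemma TN_trans:
  "0 \<le> u \<Longrightarrow> u \<le> v \<Longrightarrow> v \<le> w \<Longrightarrow> a \<in> Ob \<Longrightarrow> TN u w a = cmp (TN v w a) (TN u v a)"
  using flow unfolding strict_monoidal_flow_def by fast

lemma TN_add:
  "0 \<le> s \<Longrightarrow> s \<le> s' \<Longrightarrow> 0 \<le> t \<Longrightarrow> t \<le> t' \<Longrightarrow> a \<in> Ob \<Longrightarrow>
    TN (s + t) (s' + t') a = cmp (TN s s' (TO t' a)) (TM s (TN t t' a))"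
  using flow unfolding strict_monoidal_flow_def by fast

lemma TN_add_interchange:
  assumes "0 \<le> s" "s \<le> s'" "0 \<le> t" "t \<le> t'" "a \<in> Ob"
  shows "TN (s + t) (s' + t') a = cmp (TM s' (TN t t' a)) (TN s s' (TO t a))"
  using TN_add[OF assms] TN_natural[OF assms(1,2) TN_in_Hom[OF assms(3-5)]] by simp

lemma interleaving_eq_push_forward:
  assumes s: "0 \<le> s" "s \<le> s'" and t: "0 \<le> t" "t \<le> t'"
    and X: "X \<in> Ob" and Y: "Y \<in> Ob"
    and phi: "phi \<in> Hom X (TO s Y)" and psi: "psi \<in> Hom Y (TO t X)"
    and eq: "cmp (TM s psi) phi = TN 0 (s + t) X"
  shows "cmp (TM s' (cmp (TN t t' X) psi)) (cmp (TN s s' Y) phi) = TN 0 (s' + t') X"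
proof -
  have s': "0 \<le> s'" using s by linarith
  have TX: "TO t X \<in> Ob" using TO_in_Ob[OF t(1) X] .
  have NX: "TN t t' X \<in> Hom (TO t X) (TO t' X)" using TN_in_Hom[OF t X] .
  have NY: "TN s s' Y \<in> Hom (TO s Y) (TO s' Y)" using TN_in_Hom[OF s Y] .
  have NTX: "TN s s' (TO t X) \<in> Hom (TO s (TO t X)) (TO s' (TO t X))" using TN_in_Hom[OF s TX] .
  have TNX: "TM s' (TN t t' X) \<in> Hom (TO s' (TO t X)) (TO s' (TO t' X))" using TM_in_Hom[OF s' NX] .
  have Tpsi: "TM s psi \<in> Hom (TO s Y) (TO s (TO t X))" using TM_in_Hom[OF s(1) psi] .
  have Tpsi': "TM s' psi \<in> Hom (TO s' Y) (TO s' (TO t X))" using TM_in_Hom[OF s' psi] .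
  have "cmp (TM s' (cmp (TN t t' X) psi)) (cmp (TN s s' Y) phi)
      = cmp (cmp (TM s' (TN t t' X)) (TM s' psi)) (cmp (TN s s' Y) phi)"
    using TM_comp[OF s' psi NX] by simp
  also have "\<dots> = cmp (TM s' (TN t t' X)) (cmp (cmp (TM s' psi) (TN s s' Y)) phi)"
    using comp_assoc[OF comp_in_Hom[OF phi NY] Tpsi' TNX] comp_assoc[OF phi NY Tpsi'] by simp
  also have "\<dots> = cmp (TM s' (TN t t' X)) (cmp (cmp (TN s s' (TO t X)) (TM s psi)) phi)"
    using TN_natural[OF s psi] by simp
  also have "\<dots> = cmp (cmp (TM s' (TN t t' X)) (TN s s' (TO t X))) (cmp (TM s psi) phi)"
    using comp_assoc[OF phi Tpsi NTX] comp_assoc[OF comp_in_Hom[OF phi Tpsi] NTX TNX] by simp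
  also have "\<dots> = cmp (TN (s + t) (s' + t') X) (TN 0 (s + t) X)"
    using TN_add_interchange[OF s t X] eq by simp
  also have "\<dots> = TN 0 (s' + t') X"
    using TN_trans[of 0 "s + t" "s' + t'" X] s t X by simp
  finally show ?thesis .
qed

lemma interleaved_mono:
  assumes "interleaved Hom cmp TO TM TN s t X Y"
    and "0 \<le> s" "s \<le> s'" "0 \<le> t" "t \<le> t'" "X \<in> Ob" "Y \<in> Ob"
  shows "interleaved Hom cmp TO TM TN s' t' X Y"
proof -
  obtain phi psi where phi: "phi \<in> Hom X (TO s Y)" and psi: "psi \<in> Hom Y (TO t X)"
    and eqX: "cmp (TM s psi) phi = TN 0 (s + t) X" and eqY: "cmp (TM t phi) psi = TN 0 (t + s) Y"
    using assms(1) unfolding interleaved_def by blast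
  show ?thesis
    unfolding interleaved_def
  proof (intro exI conjI)
    show "cmp (TN s s' Y) phi \<in> Hom X (TO s' Y)"
      using comp_in_Hom[OF phi TN_in_Hom] assms by blast
    show "cmp (TN t t' X) psi \<in> Hom Y (TO t' X)"
      using comp_in_Hom[OF psi TN_in_Hom] assms by blast
    show "cmp (TM s' (cmp (TN t t' X) psi)) (cmp (TN s s' Y) phi) = TN 0 (s' + t') X"
      using interleaving_eq_push_forward[OF assms(2-7) phi psi eqX] .
    show "cmp (TM t' (cmp (TN s s' Y) phi)) (cmp (TN t t' X) psi) = TN 0 (t' + s') Y"
      using interleaving_eq_push_forward[OF assms(4,5,2,3,7,6) psi phi eqY] .
  qed
qed

lemma max_interleaving_params_eq:
  assumes "X \<in> Ob" "Y \<in> Ob"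
  shows "(\<lambda>(s, t). max s t) ` {(s, t). 0 \<le> s \<and> 0 \<le> t \<and> interleaved Hom cmp TO TM TN s t X Y}
    = {t. 0 \<le> t \<and> flow_interleaved Hom cmp TO TM TN t X Y}"
    (is "?M = ?F")
proof
  show "?M \<subseteq> ?F"
  proof
    fix m assume "m \<in> ?M"
    then obtain s t where st: "0 \<le> s" "0 \<le> t" "interleaved Hom cmp TO TM TN s t X Y"
      and m: "m = max s t"
      by auto
    have "interleaved Hom cmp TO TM TN m m X Y"
      using interleaved_mono[OF st(3,1) _ st(2) _ assms] m by simp
    then show "m \<in> ?F"
      using st m by (simp add: flow_interleaved_iff_interleaved le_max_iff_disj)
  qed
  show "?F \<subseteq> ?M"
  proof
    fix t assume "t \<in> ?F"
    then show "t \<in> ?M"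
      by (intro image_eqI[of _ _ "(t, t)"]) (auto simp: flow_interleaved_iff_interleaved)
  qed
qed

lemma flow_dist_eq_W_dist:
  assumes "X \<in> Ob" "Y \<in> Ob"
  shows "flow_dist Hom cmp TO TM TN X Y = W_dist Hom cmp TO TM TN X Y"
proof -
  have ereal_max_image:
    "(\<lambda>(s, t). ereal (max s t)) ` S = ereal ` ((\<lambda>(s, t). max s t) ` S)" for S
    unfolding image_image by (simp only: split_def)
  show ?thesis
    unfolding flow_dist_def W_dist_def ereal_max_image max_interleaving_params_eq[OF assms] ..
qed

end

theorem proposition3p9:
  fixes Ob :: "'o set" and Hom :: "'o \<Rightarrow> 'o \<Rightarrow> 'm set"
    and cmp :: "'m \<Rightarrow> 'm \<Rightarrow> 'm" and idm :: "'o \<Rightarrow> 'm"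
    and TO :: "real \<Rightarrow> 'o \<Rightarrow> 'o" and TM :: "real \<Rightarrow> 'm \<Rightarrow> 'm"
    and TN :: "real \<Rightarrow> real \<Rightarrow> 'o \<Rightarrow> 'm"
  assumes "category Ob Hom cmp idm"
    and "strict_monoidal_flow Ob Hom cmp idm TO TM TN"
    and "X \<in> Ob" and "Y \<in> Ob"
  shows "flow_dist Hom cmp TO TM TN X Y = W_dist Hom cmp TO TM TN X Y"
proof -
  interpret category_with_flow Ob Hom cmp idm TO TM TN
    using assms(1,2) by unfold_locales
  show ?thesis using flow_dist_eq_W_dist[OF assms(3,4)] .
qed

end
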